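(* Let $(X,\tau)$ be a fuzzifying topological space such that $\tau_P(A\cap B)\ge\min(\tau_P(A),\tau_P(B))$ for all $A,B\subseteq X$, and let $A\subseteq X$. Then $$\max\Big(0,\ T_2^P(X,\tau)+L_PC(A,\tau/A)+\inf_{x\in X}Cl_P(A)(x)-2\Big)\le\tau_P(A),$$ i.e. $\vDash T_2^P(X,\tau)\otimes L_PC(A,\tau/A)\otimes(Cl_P(A)\equiv X)\to A\in\tau_P$.
   Context: Łukasiewicz semantics: $[\varphi\otimes\psi]=\max(0,[\varphi]+[\psi]-1)$, $[\varphi\to\psi]=\min(1,1-[\varphi]+[\psi])$; $[Cl_P(A)\equiv X]=\inf_{x\in X}Cl_P(A)(x)$. A fuzzifying topology on $X$ is $\tau:P(X)\to[0,1]$ with $\tau(X)=1$, $\tau(A\cap B)\ge\min(\tau(A),\tau(B))$, $\tau(\bigcup A_\lambda)\ge\inf\tau(A_\lambda)$. $N_x(A)=\sup_{x\in B\subseteq A}\tau(B)$; $Cl(A)(x)=1-N_x(X\setminus A)$; for $\mu:X\to[0,1]$, $Int(\mu)(x)=\sup_{x\in B}\min(\tau(B),\inf_{y\in B}\mu(y))$. Pre-open degrees $\tau_P(A)=\inf_{x\in A}Int(Cl(A))(x)$; $N^P_x(A)=\sup_{x\in B\subseteq A}\tau_P(B)$; $Cl_P(A)(x)=1-N^P_x(X\setminus A)$. $T_2^P(X,\tau)=\inf_{x\ne y}\sup\{\min(N^P_x(B),N^P_y(C)):B\cap C=\emptyset\}$. For $G\subseteq X$: $(\tau_P/G)(B)=\sup\{\tau_P(V):V\cap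 G=B\}$. Compactness degree of $G$ w.r.t. $\rho:P(G)\to[0,1]$: with $K(\Re,G)=\inf_{x\in G}\sup_{B\ni x}\Re(B)$, $[\Re\subseteq\rho]=\inf_B\min(1,1-\Re(B)+\rho(B))$, $\wp\le\Re$ pointwise, $FF(\wp)=1-\inf\{\delta\in[0,1]:\{B:\wp(B)>\delta\}\text{ finite}\}$, $\Gamma(G,\rho)=\inf_{\Re}\min\big(1,1-\max(0,K(\Re,G)+[\Re\subseteq\rho]-1)+\sup_{\wp\le\Re}\max(0,K(\wp,G)+FF(\wp)-1)\big)$. With $N^{P^A}_x(G)=\sup_{x\in C\subseteq G}(\tau_P/A)(C)$, $L_PC(A,\tau/A)=\inf_{x\in A}\sup_{G\subseteq A}\max(0,N^{P^A}_x(G)+\Gamma(G,\tau_P/G)-1)$. *)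

theory Defs
  imports Complex_Main
begin

text \<open>The space X is the whole type 'a (UNIV). Truth values are reals in [0,1].
  Suprema/infima are taken in the complete lattice [0,1]: empty sup = 0, empty inf = 1.\<close>

definition sup01 :: "real set \<Rightarrow> real" where
  "sup01 S = (if S = {} then 0 else Sup S)"

definition inf01 :: "real set \<Rightarrow> real" where
  "inf01 S = (if S = {} then 1 else Inf S)"

definition fuzzifying_topology :: "('a set \<Rightarrow> real) \<Rightarrow> bool" where
  "fuzzifying_topology \<tau> \<longleftrightarrow>
     (\<forall>A. 0 \<le> \<tau> A \<and> \<tau> A \<le> 1) \<and>
     \<tau> UNIV = 1 \<and>
     (\<forall>A B. \<tau> (A \<inter> B) \<ge> min (\<tau> A) (\<tau> B)) \<and>
     (\<forall>\<A>. \<tau> (\<Union>\<A>) \<ge> inf01 (\<tau> ` \<A>))"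

definition nbhd :: "('a set \<Rightarrow> real) \<Rightarrow> 'a \<Rightarrow> 'a set \<Rightarrow> real" where
  "nbhd \<tau> x A = sup01 {\<tau> B | B. x \<in> B \<and> B \<subseteq> A}"

definition fclosure :: "('a set \<Rightarrow> real) \<Rightarrow> 'a set \<Rightarrow> 'a \<Rightarrow> real" where
  "fclosure \<tau> A x = 1 - nbhd \<tau> x (- A)"

definition finterior :: "('a set \<Rightarrow> real) \<Rightarrow> ('a \<Rightarrow> real) \<Rightarrow> 'a \<Rightarrow> real" where
  "finterior \<tau> \<mu> x = sup01 {min (\<tau> B) (inf01 (\<mu> ` B)) | B. x \<in> B}"

definition preopen :: "('a set \<Rightarrow> real) \<Rightarrow> 'a set \<Rightarrow> real" where
  "preopen \<tau> A = inf01 ((\<lambda>x. finterior \<tau> (fclosure \<tau> A) x) ` A)"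

definition pnbhd :: "('a set \<Rightarrow> real) \<Rightarrow> 'a \<Rightarrow> 'a set \<Rightarrow> real" where
  "pnbhd \<tau> x A = sup01 {preopen \<tau> B | B. x \<in> B \<and> B \<subseteq> A}"

definition pclosure :: "('a set \<Rightarrow> real) \<Rightarrow> 'a set \<Rightarrow> 'a \<Rightarrow> real" where
  "pclosure \<tau> A x = 1 - pnbhd \<tau> x (- A)"

definition T2P :: "('a set \<Rightarrow> real) \<Rightarrow> real" where
  "T2P \<tau> = inf01 {sup01 {min (pnbhd \<tau> x B) (pnbhd \<tau> y C) | B C. B \<inter> C = {}} | x y. x \<noteq> y}"

definition preopen_rel :: "('a set \<Rightarrow> real) \<Rightarrow> 'a set \<Rightarrow> 'a set \<Rightarrow> real" where
  "preopen_rel \<tau> G B = sup01 {preopen \<tau> V | V. V \<inter> G = B}"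

text \<open>Fuzzy families of subsets of G: maps P(G) \<rightarrow> [0,1], represented as functions on
  'a set that vanish outside Pow G.\<close>
definition fuzzy_family :: "'a set \<Rightarrow> ('a set \<Rightarrow> real) \<Rightarrow> bool" where
  "fuzzy_family G R \<longleftrightarrow> (\<forall>B. B \<subseteq> G \<longrightarrow> 0 \<le> R B \<and> R B \<le> 1) \<and> (\<forall>B. \<not> B \<subseteq> G \<longrightarrow> R B = 0)"

definition Kcov :: "('a set \<Rightarrow> real) \<Rightarrow> 'a set \<Rightarrow> real" where
  "Kcov R G = inf01 {sup01 {R B | B. x \<in> B \<and> B \<subseteq> G} | x. x \<in> G}"

definition fsubset :: "'a set \<Rightarrow> ('a set \<Rightarrow> real) \<Rightarrow> ('a set \<Rightarrow> real) \<Rightarrow> real" where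
  "fsubset G R \<rho> = inf01 {min 1 (1 - R B + \<rho> B) | B. B \<subseteq> G}"

definition FF :: "'a set \<Rightarrow> ('a set \<Rightarrow> real) \<Rightarrow> real" where
  "FF G P = 1 - inf01 {\<delta>. 0 \<le> \<delta> \<and> \<delta> \<le> 1 \<and> finite {B. B \<subseteq> G \<and> P B > \<delta>}}"

definition Gamma :: "'a set \<Rightarrow> ('a set \<Rightarrow> real) \<Rightarrow> real" where
  "Gamma G \<rho> = inf01 {min 1 (1 - max 0 (Kcov R G + fsubset G R \<rho> - 1)
        + sup01 {max 0 (Kcov P G + FF G P - 1) | P. fuzzy_family G P \<and> (\<forall>B. B \<subseteq> G \<longrightarrow> P B \<le> R B)})
     | R. fuzzy_family G R}"

definition pnbhd_rel :: "('a set \<Rightarrow> real) \<Rightarrow> 'a set \<Rightarrow> 'a \<Rightarrow> 'a set \<Rightarrow> real" where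
  "pnbhd_rel \<tau> A x G = sup01 {preopen_rel \<tau> A C | C. x \<in> C \<and> C \<subseteq> G}"

definition LPC :: "('a set \<Rightarrow> real) \<Rightarrow> 'a set \<Rightarrow> real" where
  "LPC \<tau> A = inf01 {sup01 {max 0 (pnbhd_rel \<tau> A x G + Gamma G (preopen_rel \<tau> G) - 1) | G. G \<subseteq> A}
                    | x. x \<in> A}"

end

theory Submission imports Defs begin

text \<open>Fix x in A and a level below the left-hand side. Local pre-compactness of A at x
  provides G \<subseteq> A, a relative pre-neighbourhood V of x with V \<inter> A \<subseteq> G, and a high compactness
  degree of G. If V left A at a point y, then y \<notin> G, and pre-T2 separation of y from each point
  of G, refined to a finite subcover by compactness, gives a pre-open U \<ni> y missing G; then U \<inter> V
  is a pre-open neighbourhood of y outside A, contradicting the density degree of A. Hence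
  V \<subseteq> A, so x lies in the pre-interior of A to the required degree.\<close>

lemma sup01_bounds: "\<forall>x\<in>S. 0 \<le> x \<and> x \<le> 1 \<Longrightarrow> 0 \<le> sup01 S \<and> sup01 S \<le> 1"
proof (cases "S = {}")
  case False
  assume S: "\<forall>x\<in>S. 0 \<le> x \<and> x \<le> 1"
  then obtain x where "x \<in> S" using False by blast
  moreover have "bdd_above S" using S by (intro bdd_aboveI[of _ 1]) auto
  ultimately have "x \<le> Sup S" by (rule cSup_upper)
  moreover have "Sup S \<le> 1" using False S by (intro cSup_least) auto
  ultimately show ?thesis using False S \<open>x \<in> S\<close> by (auto simp: sup01_def)
qed (simp add: sup01_def)

lemma inf01_bounds: "\<forall>x\<in>S. 0 \<le> x \<and> x \<le> 1 \<Longrightarrow> 0 \<le> inf01 S \<and> inf01 S \<le> 1"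
proof (cases "S = {}")
  case False
  assume S: "\<forall>x\<in>S. 0 \<le> x \<and> x \<le> 1"
  then obtain x where "x \<in> S" using False by blast
  moreover have "bdd_below S" using S by (intro bdd_belowI[of _ 0]) auto
  ultimately have "Inf S \<le> x" by (rule cInf_lower)
  moreover have "0 \<le> Inf S" using False S by (intro cInf_greatest) auto
  ultimately show ?thesis using False S \<open>x \<in> S\<close> by (auto simp: inf01_def)
qed (simp add: inf01_def)

lemma sup01_upper: "x \<in> S \<Longrightarrow> \<forall>s\<in>S. s \<le> 1 \<Longrightarrow> x \<le> sup01 S"
  by (auto simp: sup01_def intro!: cSup_upper bdd_aboveI[of _ 1])

lemma inf01_lower: "x \<in> S \<Longrightarrow> \<forall>s\<in>S. 0 \<le> s \<Longrightarrow> inf01 S \<le> x"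
  by (auto simp: inf01_def intro!: cInf_lower bdd_belowI[of _ 0])

lemma sup01_least: "\<forall>x\<in>S. x \<le> a \<Longrightarrow> 0 \<le> a \<Longrightarrow> sup01 S \<le> a"
  by (cases "S = {}") (auto simp: sup01_def intro: cSup_least)

lemma inf01_greatest: "\<forall>x\<in>S. a \<le> x \<Longrightarrow> a \<le> 1 \<Longrightarrow> a \<le> inf01 S"
  by (cases "S = {}") (auto simp: inf01_def intro: cInf_greatest)

lemma less_sup01D: "a < sup01 S \<Longrightarrow> 0 \<le> a \<Longrightarrow> \<exists>x\<in>S. a < x"
  by (cases "S = {}") (auto simp: sup01_def intro: less_cSupD)

lemma inf01_lessD: "inf01 S < a \<Longrightarrow> a \<le> 1 \<Longrightarrow> \<exists>x\<in>S. x < a"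
  by (cases "S = {}") (auto simp: inf01_def intro: cInf_lessD)

lemma sup01_mono: "S \<subseteq> T \<Longrightarrow> \<forall>x\<in>T. 0 \<le> x \<and> x \<le> 1 \<Longrightarrow> sup01 S \<le> sup01 T"
  using sup01_bounds[of T] by (intro sup01_least) (auto intro: sup01_upper)

lemma inf01_image_mono:
  assumes "\<forall>x\<in>B. 0 \<le> f x \<and> f x \<le> g x \<and> g x \<le> 1"
  shows "inf01 (f ` B) \<le> inf01 (g ` B)"
proof (rule inf01_greatest)
  show "\<forall>u\<in>g ` B. inf01 (f ` B) \<le> u"
    using assms by (auto intro: order_trans[OF inf01_lower])
  show "inf01 (f ` B) \<le> 1"
    using assms by (intro conjunct2[OF inf01_bounds]) force
qed

lemma fuzzifying_topology_bounds: "fuzzifying_topology \<tau> \<Longrightarrow> 0 \<le> \<tau> A \<and> \<tau> A \<le> 1"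
  by (simp add: fuzzifying_topology_def)

lemma nbhd_bounds: "fuzzifying_topology \<tau> \<Longrightarrow> 0 \<le> nbhd \<tau> x A \<and> nbhd \<tau> x A \<le> 1"
  unfolding nbhd_def by (rule sup01_bounds) (auto dest: fuzzifying_topology_bounds)

lemma fclosure_bounds: "fuzzifying_topology \<tau> \<Longrightarrow> 0 \<le> fclosure \<tau> A x \<and> fclosure \<tau> A x \<le> 1"
  unfolding fclosure_def using nbhd_bounds[of \<tau> x "- A"] by auto

lemma finterior_bounds:
  assumes "fuzzifying_topology \<tau>" and "\<forall>z. 0 \<le> \<mu> z \<and> \<mu> z \<le> 1"
  shows "0 \<le> finterior \<tau> \<mu> x \<and> finterior \<tau> \<mu> x \<le> 1"
  unfolding finterior_def
proof (rule sup01_bounds, clarify)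
  fix B
  show "0 \<le> min (\<tau> B) (inf01 (\<mu> ` B)) \<and> min (\<tau> B) (inf01 (\<mu> ` B)) \<le> 1"
    using fuzzifying_topology_bounds[OF assms(1), of B] inf01_bounds[of "\<mu> ` B"] assms(2) by auto
qed

lemma preopen_bounds: "fuzzifying_topology \<tau> \<Longrightarrow> 0 \<le> preopen \<tau> A \<and> preopen \<tau> A \<le> 1"
  unfolding preopen_def by (rule inf01_bounds) (auto intro!: finterior_bounds fclosure_bounds)

lemma pnbhd_bounds: "fuzzifying_topology \<tau> \<Longrightarrow> 0 \<le> pnbhd \<tau> x A \<and> pnbhd \<tau> x A \<le> 1"
  unfolding pnbhd_def by (rule sup01_bounds) (auto dest: preopen_bounds)

lemma pclosure_bounds: "fuzzifying_topology \<tau> \<Longrightarrow> 0 \<le> pclosure \<tau> A x \<and> pclosure \<tau> A x \<le> 1"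
  unfolding pclosure_def using pnbhd_bounds[of \<tau> x "- A"] by auto

lemma inf01_range_pclosure_bounds:
  assumes "fuzzifying_topology \<tau>"
  shows "0 \<le> inf01 (range (pclosure \<tau> A)) \<and> inf01 (range (pclosure \<tau> A)) \<le> 1"
  using pclosure_bounds[OF assms] by (intro inf01_bounds) auto

lemma preopen_rel_bounds:
  "fuzzifying_topology \<tau> \<Longrightarrow> 0 \<le> preopen_rel \<tau> G B \<and> preopen_rel \<tau> G B \<le> 1"
  unfolding preopen_rel_def by (rule sup01_bounds) (auto dest: preopen_bounds)

lemma pnbhd_rel_bounds:
  "fuzzifying_topology \<tau> \<Longrightarrow> 0 \<le> pnbhd_rel \<tau> A x G \<and> pnbhd_rel \<tau> A x G \<le> 1"
  unfolding pnbhd_rel_def by (rule sup01_bounds) (auto dest: preopen_rel_bounds)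

lemma T2P_bounds:
  assumes T: "fuzzifying_topology \<tau>"
  shows "0 \<le> T2P \<tau> \<and> T2P \<tau> \<le> 1"
  unfolding T2P_def
proof (intro inf01_bounds ballI, clarify, intro sup01_bounds ballI, clarify)
  fix x y B C
  show "0 \<le> min (pnbhd \<tau> x B) (pnbhd \<tau> y C) \<and> min (pnbhd \<tau> x B) (pnbhd \<tau> y C) \<le> 1"
    using pnbhd_bounds[OF T, of x B] pnbhd_bounds[OF T, of y C] by (simp add: min_le_iff_disj)
qed

lemma fuzzy_family_bounds: "fuzzy_family G R \<Longrightarrow> 0 \<le> R B \<and> R B \<le> 1"
  unfolding fuzzy_family_def by (cases "B \<subseteq> G") auto

lemma Kcov_bounds:
  assumes "\<forall>B. 0 \<le> R B \<and> R B \<le> 1"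
  shows "0 \<le> Kcov R G \<and> Kcov R G \<le> 1"
  unfolding Kcov_def
proof (intro inf01_bounds ballI, clarify)
  fix x
  show "0 \<le> sup01 {R B | B. x \<in> B \<and> B \<subseteq> G} \<and> sup01 {R B | B. x \<in> B \<and> B \<subseteq> G} \<le> 1"
    using assms by (intro sup01_bounds) blast
qed

lemma fsubset_bounds:
  assumes "\<forall>B. 0 \<le> R B \<and> R B \<le> 1" and "\<forall>B. 0 \<le> \<rho> B \<and> \<rho> B \<le> 1"
  shows "0 \<le> fsubset G R \<rho> \<and> fsubset G R \<rho> \<le> 1"
  unfolding fsubset_def
proof (rule inf01_bounds, clarify)
  fix B
  show "0 \<le> min 1 (1 - R B + \<rho> B) \<and> min 1 (1 - R B + \<rho> B) \<le> 1"
    using assms[THEN spec, of B] by simp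
qed

lemma FF_bounds: "0 \<le> FF G P \<and> FF G P \<le> 1"
  using inf01_bounds[of "{\<delta>. 0 \<le> \<delta> \<and> \<delta> \<le> 1 \<and> finite {B. B \<subseteq> G \<and> P B > \<delta>}}"]
  unfolding FF_def by auto

definition finite_subcover_degree :: "'a set \<Rightarrow> ('a set \<Rightarrow> real) \<Rightarrow> real" where
  "finite_subcover_degree G R =
     sup01 {max 0 (Kcov P G + FF G P - 1) | P. fuzzy_family G P \<and> (\<forall>B. B \<subseteq> G \<longrightarrow> P B \<le> R B)}"

lemma Gamma_altdef: "Gamma G \<rho> = inf01 {min 1 (1 - max 0 (Kcov R G + fsubset G R \<rho> - 1)
    + finite_subcover_degree G R) | R. fuzzy_family G R}"
  by (simp add: Gamma_def finite_subcover_degree_def)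

lemma finite_subcover_degree_nonneg: "0 \<le> finite_subcover_degree G R"
  unfolding finite_subcover_degree_def
proof (intro conjunct1[OF sup01_bounds] ballI, clarify)
  fix P assume "fuzzy_family G P"
  then have "Kcov P G \<le> 1" using Kcov_bounds fuzzy_family_bounds by blast
  then show "0 \<le> max 0 (Kcov P G + FF G P - 1) \<and> max 0 (Kcov P G + FF G P - 1) \<le> 1"
    using FF_bounds[of G P] by simp
qed

lemma Gamma_term_bounds:
  assumes "fuzzy_family G R" and "\<forall>B. 0 \<le> \<rho> B \<and> \<rho> B \<le> 1"
  shows "0 \<le> min 1 (1 - max 0 (Kcov R G + fsubset G R \<rho> - 1) + finite_subcover_degree G R)"
proof -
  have R: "\<forall>B. 0 \<le> R B \<and> R B \<le> 1" using fuzzy_family_bounds[OF assms(1)] by blast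
  have "Kcov R G \<le> 1" using Kcov_bounds[OF R] by blast
  moreover have "fsubset G R \<rho> \<le> 1" using fsubset_bounds[OF R assms(2)] by blast
  ultimately show ?thesis using finite_subcover_degree_nonneg[of G R] by auto
qed

lemma Gamma_bounds:
  assumes "\<forall>B. 0 \<le> \<rho> B \<and> \<rho> B \<le> 1"
  shows "0 \<le> Gamma G \<rho> \<and> Gamma G \<rho> \<le> 1"
  unfolding Gamma_altdef
proof (rule inf01_bounds, clarify)
  fix R assume "fuzzy_family G R"
  then show "0 \<le> min 1 (1 - max 0 (Kcov R G + fsubset G R \<rho> - 1) + finite_subcover_degree G R) \<and>
      min 1 (1 - max 0 (Kcov R G + fsubset G R \<rho> - 1) + finite_subcover_degree G R) \<le> 1"
    using Gamma_term_bounds[OF _ assms] by simp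
qed

lemma Gamma_le:
  assumes "fuzzy_family G R" and "\<forall>B. 0 \<le> \<rho> B \<and> \<rho> B \<le> 1"
  shows "Gamma G \<rho> \<le> 1 - max 0 (Kcov R G + fsubset G R \<rho> - 1) + finite_subcover_degree G R"
proof -
  have "Gamma G \<rho> \<le> min 1 (1 - max 0 (Kcov R G + fsubset G R \<rho> - 1) + finite_subcover_degree G R)"
    unfolding Gamma_altdef using assms
    by (intro inf01_lower) (blast, use Gamma_term_bounds[OF _ assms(2)] in blast)
  then show ?thesis by linarith
qed

lemma LPC_term_bounds:
  assumes T: "fuzzifying_topology \<tau>"
  shows "0 \<le> max 0 (pnbhd_rel \<tau> A x G + Gamma G (preopen_rel \<tau> G) - 1) \<and>
      max 0 (pnbhd_rel \<tau> A x G + Gamma G (preopen_rel \<tau> G) - 1) \<le> 1"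
proof -
  have "pnbhd_rel \<tau> A x G \<le> 1" using pnbhd_rel_bounds[OF T] by blast
  moreover have "Gamma G (preopen_rel \<tau> G) \<le> 1"
    using Gamma_bounds preopen_rel_bounds[OF T] by blast
  ultimately show ?thesis by simp
qed

lemma LPC_sup_bounds:
  assumes T: "fuzzifying_topology \<tau>"
  shows "0 \<le> sup01 {max 0 (pnbhd_rel \<tau> A x G + Gamma G (preopen_rel \<tau> G) - 1) | G. G \<subseteq> A} \<and>
    sup01 {max 0 (pnbhd_rel \<tau> A x G + Gamma G (preopen_rel \<tau> G) - 1) | G. G \<subseteq> A} \<le> 1"
proof (rule sup01_bounds, clarify)
  fix G
  show "0 \<le> max 0 (pnbhd_rel \<tau> A x G + Gamma G (preopen_rel \<tau> G) - 1) \<and>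
      max 0 (pnbhd_rel \<tau> A x G + Gamma G (preopen_rel \<tau> G) - 1) \<le> 1"
    by (rule LPC_term_bounds[OF T])
qed

lemma LPC_bounds:
  assumes T: "fuzzifying_topology \<tau>"
  shows "0 \<le> LPC \<tau> A \<and> LPC \<tau> A \<le> 1"
  unfolding LPC_def
proof (rule inf01_bounds, clarify)
  fix x
  show "0 \<le> sup01 {max 0 (pnbhd_rel \<tau> A x G + Gamma G (preopen_rel \<tau> G) - 1) | G. G \<subseteq> A} \<and>
    sup01 {max 0 (pnbhd_rel \<tau> A x G + Gamma G (preopen_rel \<tau> G) - 1) | G. G \<subseteq> A} \<le> 1"
    by (rule LPC_sup_bounds[OF T])
qed

lemma less_LPCD:
  assumes T: "fuzzifying_topology \<tau>" and "x \<in> A" and "0 \<le> s" and "s < LPC \<tau> A"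
  shows "\<exists>G\<subseteq>A. s < pnbhd_rel \<tau> A x G + Gamma G (preopen_rel \<tau> G) - 1"
proof -
  let ?S = "{max 0 (pnbhd_rel \<tau> A x G + Gamma G (preopen_rel \<tau> G) - 1) | G. G \<subseteq> A}"
  have "LPC \<tau> A \<le> sup01 ?S"
    unfolding LPC_def using \<open>x \<in> A\<close> LPC_sup_bounds[OF T] by (intro inf01_lower) blast+
  then have "s < sup01 ?S" using \<open>s < LPC \<tau> A\<close> by linarith
  then show ?thesis using \<open>0 \<le> s\<close> by (auto dest!: less_sup01D)
qed

lemma less_pnbhdD: "0 \<le> a \<Longrightarrow> a < pnbhd \<tau> x A \<Longrightarrow> \<exists>B. x \<in> B \<and> B \<subseteq> A \<and> a < preopen \<tau> B"
  unfolding pnbhd_def by (auto dest!: less_sup01D)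

lemma less_pnbhd_relD:
  "0 \<le> a \<Longrightarrow> a < pnbhd_rel \<tau> A x G \<Longrightarrow> \<exists>V. x \<in> V \<and> V \<inter> A \<subseteq> G \<and> a < preopen \<tau> V"
  unfolding pnbhd_rel_def preopen_rel_def by (auto dest!: less_sup01D)

lemma preopen_le_pnbhd:
  assumes "fuzzifying_topology \<tau>" and "x \<in> B" and "B \<subseteq> A"
  shows "preopen \<tau> B \<le> pnbhd \<tau> x A"
  unfolding pnbhd_def using assms preopen_bounds[OF assms(1)] by (intro sup01_upper) auto

lemma pclosure_le:
  assumes "fuzzifying_topology \<tau>" and "x \<in> B" and "B \<inter> A = {}"
  shows "pclosure \<tau> A x \<le> 1 - preopen \<tau> B"
  using preopen_le_pnbhd[OF assms(1,2), of "- A"] assms(3) unfolding pclosure_def by auto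

lemma preopen_le_preopen_rel:
  "fuzzifying_topology \<tau> \<Longrightarrow> preopen \<tau> V \<le> preopen_rel \<tau> G (V \<inter> G)"
  unfolding preopen_rel_def using preopen_bounds by (intro sup01_upper) auto

lemma T2P_separation:
  assumes T: "fuzzifying_topology \<tau>" and "x \<noteq> y" and a: "0 \<le> a" "a < T2P \<tau>"
  shows "\<exists>B C. x \<in> B \<and> y \<in> C \<and> B \<inter> C = {} \<and> a < preopen \<tau> B \<and> a < preopen \<tau> C"
proof -
  have "T2P \<tau> \<le> sup01 {min (pnbhd \<tau> x B) (pnbhd \<tau> y C) | B C. B \<inter> C = {}}"
    unfolding T2P_def
  proof (rule inf01_lower)
    show "\<forall>s\<in>{sup01 {min (pnbhd \<tau> x B) (pnbhd \<tau> y C) | B C. B \<inter> C = {}} | x y. x \<noteq> y}. 0 \<le> s"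
    proof clarify
      fix u v
      show "0 \<le> sup01 {min (pnbhd \<tau> u B) (pnbhd \<tau> v C) | B C. B \<inter> C = {}}"
        using pnbhd_bounds[OF T]
        by (intro conjunct1[OF sup01_bounds] ballI) (auto simp: min_le_iff_disj)
    qed
  qed (use \<open>x \<noteq> y\<close> in blast)
  then have "a < sup01 {min (pnbhd \<tau> x B) (pnbhd \<tau> y C) | B C. B \<inter> C = {}}"
    using a(2) by linarith
  then obtain B C where BC: "B \<inter> C = {}" "a < pnbhd \<tau> x B" "a < pnbhd \<tau> y C"
    using a(1) by (auto dest!: less_sup01D)
  obtain B' where "x \<in> B'" "B' \<subseteq> B" "a < preopen \<tau> B'" using less_pnbhdD[OF a(1) BC(2)] by blast
  moreover obtain C' where "y \<in> C'" "C' \<subseteq> C" "a < preopen \<tau> C'" using less_pnbhdD[OF a(1) BC(3)] by blast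
  ultimately show ?thesis using BC(1) by blast
qed

lemma preopen_UNIV:
  assumes T: "fuzzifying_topology \<tau>"
  shows "preopen \<tau> UNIV = 1"
proof -
  have "fclosure \<tau> UNIV z = 1" for z
    by (simp add: fclosure_def nbhd_def sup01_def)
  then have "min (\<tau> UNIV) (inf01 (fclosure \<tau> UNIV ` UNIV)) = 1"
    using T by (simp add: fuzzifying_topology_def inf01_def)
  moreover have "min (\<tau> UNIV) (inf01 (fclosure \<tau> UNIV ` UNIV)) \<le> finterior \<tau> (fclosure \<tau> UNIV) x" for x
    unfolding finterior_def using fuzzifying_topology_bounds[OF T]
    by (intro sup01_upper) (auto simp: min_le_iff_disj)
  ultimately have "1 \<le> preopen \<tau> UNIV"
    unfolding preopen_def by (intro inf01_greatest) auto
  then show ?thesis using preopen_bounds[OF T, of UNIV] by linarith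
qed

lemma preopen_INT:
  assumes T: "fuzzifying_topology \<tau>"
    and inter: "\<forall>U V. preopen \<tau> (U \<inter> V) \<ge> min (preopen \<tau> U) (preopen \<tau> V)"
    and "finite W" and "a \<le> 1" and "\<forall>w\<in>W. a \<le> preopen \<tau> (B w)"
  shows "a \<le> preopen \<tau> (\<Inter>w\<in>W. B w)"
  using assms(3,5)
proof (induction W rule: finite_induct)
  case empty
  then show ?case using preopen_UNIV[OF T] \<open>a \<le> 1\<close> by simp
next
  case (insert w W)
  then have "a \<le> min (preopen \<tau> (B w)) (preopen \<tau> (\<Inter>w\<in>W. B w))" by simp
  also have "\<dots> \<le> preopen \<tau> (B w \<inter> (\<Inter>w\<in>W. B w))" using inter by blast
  finally show ?case by simp
qed

lemma Kcov_le:
  assumes R: "\<forall>B. 0 \<le> R B \<and> R B \<le> 1" and "z \<in> G"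
  shows "Kcov R G \<le> sup01 {R B | B. z \<in> B \<and> B \<subseteq> G}"
  unfolding Kcov_def
proof (rule inf01_lower)
  show "\<forall>s\<in>{sup01 {R B | B. x \<in> B \<and> B \<subseteq> G} | x. x \<in> G}. 0 \<le> s"
  proof clarify
    fix x
    show "0 \<le> sup01 {R B | B. x \<in> B \<and> B \<subseteq> G}"
      using R by (intro conjunct1[OF sup01_bounds]) blast
  qed
qed (use \<open>z \<in> G\<close> in blast)

lemma finite_subcover_of_degree:
  assumes "0 < finite_subcover_degree G R"
  shows "\<exists>F. finite F \<and> (\<forall>B\<in>F. B \<subseteq> G \<and> 0 < R B) \<and> G \<subseteq> \<Union>F"
proof -
  obtain P where P: "fuzzy_family G P" "\<forall>B. B \<subseteq> G \<longrightarrow> P B \<le> R B" "1 < Kcov P G + FF G P"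
    using less_sup01D[OF assms[unfolded finite_subcover_degree_def]] by auto
  have P01: "\<forall>B. 0 \<le> P B \<and> P B \<le> 1" using fuzzy_family_bounds[OF P(1)] by blast
  let ?D = "{\<delta>. 0 \<le> \<delta> \<and> \<delta> \<le> 1 \<and> finite {B. B \<subseteq> G \<and> P B > \<delta>}}"
  have "inf01 ?D < Kcov P G" using P(3) by (simp add: FF_def)
  moreover have "Kcov P G \<le> 1" using Kcov_bounds[OF P01] by blast
  ultimately obtain \<delta> where \<delta>: "0 \<le> \<delta>" "finite {B. B \<subseteq> G \<and> P B > \<delta>}" "\<delta> < Kcov P G"
    using inf01_lessD by blast
  have "G \<subseteq> \<Union>{B. B \<subseteq> G \<and> P B > \<delta>}"
  proof
    fix z assume z: "z \<in> G"
    have "\<delta> < sup01 {P B | B. z \<in> B \<and> B \<subseteq> G}" using Kcov_le[OF P01 z] \<delta>(3) by linarith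
    then show "z \<in> \<Union>{B. B \<subseteq> G \<and> P B > \<delta>}" using \<delta>(1) by (auto dest!: less_sup01D)
  qed
  moreover have "\<forall>B\<in>{B. B \<subseteq> G \<and> P B > \<delta>}. B \<subseteq> G \<and> 0 < R B"
    using P(2) \<delta>(1) by force
  ultimately show ?thesis using \<delta>(2) by blast
qed

lemma Gamma_finite_subcover:
  assumes \<rho>: "\<forall>B. 0 \<le> \<rho> B \<and> \<rho> B \<le> 1" and a: "0 \<le> a" "a \<le> 1"
    and \<Gamma>: "1 - a < Gamma G \<rho>"
    and cover: "\<forall>z\<in>G. z \<in> C z \<and> a \<le> \<rho> (C z \<inter> G)"
  shows "\<exists>W. finite W \<and> W \<subseteq> G \<and> G \<subseteq> (\<Union>w\<in>W. C w)"
proof -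
  \<comment> \<open>Gamma is tested against the family of degree a on the traces of the cover.\<close>
  define R where "R B = (if \<exists>w\<in>G. B = C w \<inter> G then a else 0)" for B
  have R: "fuzzy_family G R" using a unfolding fuzzy_family_def R_def by auto
  have "a \<le> Kcov R G"
    unfolding Kcov_def
  proof (rule inf01_greatest[OF _ a(2)], clarify)
    fix z assume z: "z \<in> G"
    have "R (C z \<inter> G) = a" using z unfolding R_def by auto
    moreover have "C z \<inter> G \<in> {B. z \<in> B \<and> B \<subseteq> G}" using z cover by blast
    ultimately have "a \<in> {R B | B. z \<in> B \<and> B \<subseteq> G}" by force
    then show "a \<le> sup01 {R B | B. z \<in> B \<and> B \<subseteq> G}"
      using fuzzy_family_bounds[OF R] by (intro sup01_upper) auto
  qed
  moreover have "1 \<le> fsubset G R \<rho>"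
    unfolding fsubset_def
  proof (rule inf01_greatest, clarify)
    fix B
    show "1 \<le> min 1 (1 - R B + \<rho> B)"
    proof (cases "\<exists>w\<in>G. B = C w \<inter> G")
      case True
      then obtain w where "w \<in> G" "B = C w \<inter> G" by blast
      then have "a \<le> \<rho> B" using cover by blast
      then show ?thesis using True unfolding R_def by simp
    next
      case False
      then show ?thesis using \<rho> unfolding R_def by simp
    qed
  qed simp
  ultimately have "a \<le> max 0 (Kcov R G + fsubset G R \<rho> - 1)"
    by (intro max.coboundedI2) linarith
  then have "0 < finite_subcover_degree G R" using Gamma_le[OF R \<rho>] \<Gamma> by linarith
  from finite_subcover_of_degree[OF this] obtain F
    where F: "finite F" "\<forall>B\<in>F. B \<subseteq> G \<and> 0 < R B" "G \<subseteq> \<Union>F"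
    by blast
  have "\<forall>B\<in>F. \<exists>w. w \<in> G \<and> B = C w \<inter> G"
  proof
    fix B assume "B \<in> F"
    then have "0 < R B" using F(2) by blast
    then show "\<exists>w. w \<in> G \<and> B = C w \<inter> G" unfolding R_def by (auto split: if_splits)
  qed
  from bchoice[OF this] obtain w where w: "\<forall>B\<in>F. w B \<in> G \<and> B = C (w B) \<inter> G"
    by blast
  show ?thesis
  proof (intro exI conjI)
    show "finite (w ` F)" using F(1) by simp
    show "w ` F \<subseteq> G" using w by blast
    show "G \<subseteq> (\<Union>v\<in>w ` F. C v)"
    proof
      fix z assume "z \<in> G"
      then obtain B where "B \<in> F" "z \<in> B" using F(3) by blast
      then show "z \<in> (\<Union>v\<in>w ` F. C v)" using w by blast
    qed
  qed
qed

lemma T2P_separates_point_from_compact: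
  assumes T: "fuzzifying_topology \<tau>"
    and inter: "\<forall>U V. preopen \<tau> (U \<inter> V) \<ge> min (preopen \<tau> U) (preopen \<tau> V)"
    and "y \<notin> G" and a: "0 \<le> a" "a < T2P \<tau>"
    and \<Gamma>: "1 - a < Gamma G (preopen_rel \<tau> G)"
  shows "\<exists>U. y \<in> U \<and> U \<inter> G = {} \<and> a \<le> preopen \<tau> U"
proof -
  have a1: "a \<le> 1" using a(2) T2P_bounds[OF T] by linarith
  have "\<forall>z\<in>G. \<exists>B C. y \<in> B \<and> z \<in> C \<and> B \<inter> C = {} \<and> a < preopen \<tau> B \<and> a < preopen \<tau> C"
    using \<open>y \<notin> G\<close> by (intro ballI T2P_separation[OF T _ a]) blast
  from bchoice[OF this] obtain B where
    "\<forall>z\<in>G. \<exists>C. y \<in> B z \<and> z \<in> C \<and> B z \<inter> C = {} \<and> a < preopen \<tau> (B z) \<and> a < preopen \<tau> C"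
    by blast
  from bchoice[OF this] obtain C where BC:
    "\<forall>z\<in>G. y \<in> B z \<and> z \<in> C z \<and> B z \<inter> C z = {} \<and> a < preopen \<tau> (B z) \<and> a < preopen \<tau> (C z)"
    by blast
  have cover: "\<forall>z\<in>G. z \<in> C z \<and> a \<le> preopen_rel \<tau> G (C z \<inter> G)"
    using BC preopen_le_preopen_rel[OF T] by (meson less_imp_le order_trans)
  have "\<forall>B. 0 \<le> preopen_rel \<tau> G B \<and> preopen_rel \<tau> G B \<le> 1"
    using preopen_rel_bounds[OF T] by blast
  from Gamma_finite_subcover[OF this a(1) a1 \<Gamma> cover] obtain W
    where W: "finite W" "W \<subseteq> G" "G \<subseteq> (\<Union>w\<in>W. C w)"
    by blast
  show ?thesis
  proof (intro exI conjI)
    show "y \<in> (\<Inter>w\<in>W. B w)" using W(2) BC by blast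
    show "(\<Inter>w\<in>W. B w) \<inter> G = {}"
    proof (rule ccontr)
      assume "(\<Inter>w\<in>W. B w) \<inter> G \<noteq> {}"
      then obtain z where z: "z \<in> G" "\<forall>w\<in>W. z \<in> B w" by blast
      then obtain w where "w \<in> W" "z \<in> C w" using W(3) by blast
      then show False using z W(2) BC by blast
    qed
    show "a \<le> preopen \<tau> (\<Inter>w\<in>W. B w)"
      using W(1,2) BC by (intro preopen_INT[OF T inter _ a1]) (auto intro: less_imp_le)
  qed
qed

lemma nbhd_mono:
  "fuzzifying_topology \<tau> \<Longrightarrow> A \<subseteq> B \<Longrightarrow> nbhd \<tau> x A \<le> nbhd \<tau> x B"
  unfolding nbhd_def by (rule sup01_mono) (auto dest: fuzzifying_topology_bounds)

lemma fclosure_mono: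
  "fuzzifying_topology \<tau> \<Longrightarrow> A \<subseteq> B \<Longrightarrow> fclosure \<tau> A x \<le> fclosure \<tau> B x"
  unfolding fclosure_def using nbhd_mono[of \<tau> "- B" "- A" x] by auto

lemma finterior_mono:
  assumes T: "fuzzifying_topology \<tau>" and "\<forall>z. 0 \<le> \<mu> z \<and> \<mu> z \<le> \<nu> z \<and> \<nu> z \<le> 1"
  shows "finterior \<tau> \<mu> x \<le> finterior \<tau> \<nu> x"
  unfolding finterior_def
proof (rule sup01_least)
  have \<nu>: "\<forall>z. 0 \<le> \<nu> z \<and> \<nu> z \<le> 1" using assms(2) by (blast intro: order_trans)
  have le1: "\<forall>s\<in>{min (\<tau> B) (inf01 (\<nu> ` B)) | B. x \<in> B}. s \<le> 1"
    using fuzzifying_topology_bounds[OF T] by (auto simp: min_le_iff_disj)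
  show "\<forall>s\<in>{min (\<tau> B) (inf01 (\<mu> ` B)) | B. x \<in> B}. s \<le> sup01 {min (\<tau> B) (inf01 (\<nu> ` B)) | B. x \<in> B}"
  proof clarify
    fix B assume "x \<in> B"
    then have "min (\<tau> B) (inf01 (\<nu> ` B)) \<le> sup01 {min (\<tau> B) (inf01 (\<nu> ` B)) | B. x \<in> B}"
      using le1 by (intro sup01_upper) blast+
    moreover have "inf01 (\<mu> ` B) \<le> inf01 (\<nu> ` B)" using assms(2) by (intro inf01_image_mono) blast
    ultimately show "min (\<tau> B) (inf01 (\<mu> ` B)) \<le> sup01 {min (\<tau> B) (inf01 (\<nu> ` B)) | B. x \<in> B}"
      by linarith
  qed
  show "0 \<le> sup01 {min (\<tau> B) (inf01 (\<nu> ` B)) | B. x \<in> B}"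
    using finterior_bounds[OF T \<nu>] unfolding finterior_def by blast
qed

lemma finterior_fclosure_bounds:
  assumes "fuzzifying_topology \<tau>"
  shows "0 \<le> finterior \<tau> (fclosure \<tau> A) x \<and> finterior \<tau> (fclosure \<tau> A) x \<le> 1"
  using fclosure_bounds[OF assms] by (intro finterior_bounds[OF assms]) blast

lemma preopen_le_finterior_fclosure:
  assumes "fuzzifying_topology \<tau>" and "x \<in> A"
  shows "preopen \<tau> A \<le> finterior \<tau> (fclosure \<tau> A) x"
  unfolding preopen_def using assms finterior_fclosure_bounds[OF assms(1)] by (intro inf01_lower) auto

lemma finterior_fclosure_mono:
  assumes "fuzzifying_topology \<tau>" and "A \<subseteq> B"
  shows "finterior \<tau> (fclosure \<tau> A) x \<le> finterior \<tau> (fclosure \<tau> B) x"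
  using assms fclosure_bounds[OF assms(1)] fclosure_mono[OF assms]
  by (intro finterior_mono) blast+

lemma preopen_geI:
  assumes T: "fuzzifying_topology \<tau>" and "M \<le> 1"
    and local: "\<And>x c. x \<in> A \<Longrightarrow> 0 \<le> c \<Longrightarrow> c < M \<Longrightarrow> \<exists>W. x \<in> W \<and> W \<subseteq> A \<and> c < preopen \<tau> W"
  shows "M \<le> preopen \<tau> A"
  unfolding preopen_def
proof (rule inf01_greatest[OF _ \<open>M \<le> 1\<close>], clarify)
  fix x assume x: "x \<in> A"
  show "M \<le> finterior \<tau> (fclosure \<tau> A) x"
  proof (rule dense_le)
    fix c assume "c < M"
    show "c \<le> finterior \<tau> (fclosure \<tau> A) x"
    proof (cases "0 \<le> c")
      case True
      then obtain W where W: "x \<in> W" "W \<subseteq> A" "c < preopen \<tau> W" using local x \<open>c < M\<close> by blast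
      have "preopen \<tau> W \<le> finterior \<tau> (fclosure \<tau> W) x"
        using preopen_le_finterior_fclosure[OF T W(1)] .
      also have "\<dots> \<le> finterior \<tau> (fclosure \<tau> A) x"
        using finterior_fclosure_mono[OF T W(2)] .
      finally show ?thesis using W(3) by linarith
    next
      case False
      then show ?thesis using finterior_fclosure_bounds[OF T, of A x] by linarith
    qed
  qed
qed

lemma preopen_nbhd_inside:
  assumes T: "fuzzifying_topology \<tau>"
    and inter: "\<forall>U V. preopen \<tau> (U \<inter> V) \<ge> min (preopen \<tau> U) (preopen \<tau> V)"
    and x: "x \<in> A" and c: "0 \<le> c" "c < T2P \<tau> + LPC \<tau> A + inf01 (range (pclosure \<tau> A)) - 2"
  shows "\<exists>W. x \<in> W \<and> W \<subseteq> A \<and> c < preopen \<tau> W"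
proof -
  define t l d where "t = T2P \<tau>" and "l = LPC \<tau> A" and "d = inf01 (range (pclosure \<tau> A))"
  \<comment> \<open>A quarter of the slack of c, so that each of the approximations below keeps a margin.\<close>
  define \<eta> where "\<eta> = (t + l + d - 2 - c) / 4"
  have "t \<le> 1" using T2P_bounds[OF T] by (simp add: t_def)
  moreover have "l \<le> 1" using LPC_bounds[OF T] by (simp add: l_def)
  moreover have "d \<le> 1" using inf01_range_pclosure_bounds[OF T] by (simp add: d_def)
  moreover have "c + 4 * \<eta> = t + l + d - 2" by (simp add: \<eta>_def field_simps)
  ultimately have \<eta>: "0 < \<eta>" "c + 3 * \<eta> < l" "\<eta> < t" "1 + 3 * \<eta> < t + l" "1 + 3 * \<eta> < t + d"
    "1 + 3 * \<eta> < l + d"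
    using c unfolding t_def l_def d_def by linarith+
  obtain G where G: "G \<subseteq> A" "l - \<eta> < pnbhd_rel \<tau> A x G + Gamma G (preopen_rel \<tau> G) - 1"
    using less_LPCD[OF T x, of "l - \<eta>"] \<eta> c(1) unfolding l_def by auto
  define \<Gamma> where "\<Gamma> = Gamma G (preopen_rel \<tau> G)"
  have \<Gamma>_le: "\<Gamma> \<le> 1" using Gamma_bounds preopen_rel_bounds[OF T] unfolding \<Gamma>_def by blast
  moreover have "pnbhd_rel \<tau> A x G \<le> 1" using pnbhd_rel_bounds[OF T] by blast
  ultimately have \<Gamma>: "l - \<eta> < \<Gamma>" "0 \<le> l - \<eta> + 1 - \<Gamma>" using G(2) \<eta> c(1) unfolding \<Gamma>_def by linarith+
  have "l - \<eta> + 1 - \<Gamma> < pnbhd_rel \<tau> A x G" using G(2) unfolding \<Gamma>_def by linarith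
  from less_pnbhd_relD[OF \<Gamma>(2) this] obtain V
    where V: "x \<in> V" "V \<inter> A \<subseteq> G" "l - \<eta> + 1 - \<Gamma> < preopen \<tau> V"
    by blast
  have "V \<subseteq> A"
  proof
    fix y assume y: "y \<in> V"
    show "y \<in> A"
    proof (rule ccontr)
      assume "y \<notin> A"
      then have "y \<notin> G" using G(1) by blast
      moreover have "0 \<le> t - \<eta>" "t - \<eta> < T2P \<tau>" using \<eta> unfolding t_def by linarith+
      moreover have "1 - (t - \<eta>) < Gamma G (preopen_rel \<tau> G)"
        using \<Gamma>(1) \<eta> unfolding \<Gamma>_def by linarith
      ultimately have "\<exists>U. y \<in> U \<and> U \<inter> G = {} \<and> t - \<eta> \<le> preopen \<tau> U"
        by (rule T2P_separates_point_from_compact[OF T inter])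
      then obtain U where U: "y \<in> U" "U \<inter> G = {}" "t - \<eta> \<le> preopen \<tau> U" by blast
      have "d \<le> pclosure \<tau> A y"
        using pclosure_bounds[OF T] unfolding d_def by (intro inf01_lower) auto
      also have "\<dots> \<le> 1 - preopen \<tau> (U \<inter> V)"
        using U(1,2) V(2) y by (intro pclosure_le[OF T]) auto
      also have "\<dots> \<le> 1 - min (preopen \<tau> U) (preopen \<tau> V)" using inter by simp
      finally show False using U(3) V(3) \<Gamma>_le \<eta> by (auto simp: min_def split: if_splits)
    qed
  qed
  moreover have "c < preopen \<tau> V" using V(3) \<Gamma>_le \<eta> by linarith
  ultimately show ?thesis using V(1) by blast
qed

theorem theorem4p2:
  fixes \<tau> :: "'a set \<Rightarrow> real" and A :: "'a set"
  assumes "fuzzifying_topology \<tau>"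
    and "\<forall>U V. preopen \<tau> (U \<inter> V) \<ge> min (preopen \<tau> U) (preopen \<tau> V)"
  shows "max 0 (T2P \<tau> + LPC \<tau> A + inf01 (range (pclosure \<tau> A)) - 2) \<le> preopen \<tau> A"
proof -
  have "T2P \<tau> + LPC \<tau> A + inf01 (range (pclosure \<tau> A)) - 2 \<le> 1"
    using T2P_bounds[OF assms(1)] LPC_bounds[OF assms(1), of A]
      inf01_range_pclosure_bounds[OF assms(1), of A] by linarith
  then have "T2P \<tau> + LPC \<tau> A + inf01 (range (pclosure \<tau> A)) - 2 \<le> preopen \<tau> A"
    using preopen_nbhd_inside[OF assms] by (intro preopen_geI[OF assms(1)])
  then show ?thesis using preopen_bounds[OF assms(1), of A] by simp
qed

end
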